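(* (i) For every integer $m\ge1$ and every $n\ge0$, $$v_{2n+1}(x,m,s)=\sum_{k=0}^{n}(-1)^k\binom{2n+1}{2k+1}\frac{(m+2n-2k-1)!\,(2m+2n)!}{(m+2n)!\,(2m+2n-2k-1)!}\,\frac{T_{2k+1}}{2^{2k+1}}\,x^{2k+1}\,v_{2n-2k}(x,m,s).$$ (ii) For $m=0$ and every $n\ge 0$, $$v_{2n+1}(x,0,s)=\sum_{k=0}^{n-1}(-1)^k\binom{2n+1}{2k+1}\frac{T_{2k+1}}{2^{2k+1}}\,x^{2k+1}\,v_{2n-2k}(x,0,s)+(-1)^n\frac{T_{2n+1}}{2^{2n}}\,x^{2n+1}.$$
   Context: For an integer $m\ge0$ and indeterminates $x,s$, $v_0(x,m,s)=1$ and for $n\ge1$ $$v_n(x,m,s)=\sum_{k=0}^{\lfloor n/2\rfloor}(-1)^k\frac{n!}{k!\,(n-2k)!}\,\frac{(m+n-k-1)!}{(m+n-1)!}\,\frac{s^k}{2^{2k}}\,x^{n-2k}.$$ The tangent numbers $T_{2n+1}$ are defined by $\frac{e^z-e^{-z}}{e^z+e^{-z}}=\sum_{n\ge0}(-1)^n\frac{T_{2n+1}}{(2n+1)!}z^{2n+1}$ (so $T_1=1,T_3=2,T_5=16,\dots$). *)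

theory Defs
  imports "HOL-Computational_Algebra.Formal_Power_Series"
begin

text \<open>The polynomials v_n(x,m,s), evaluated at x, s in an arbitrary field of
characteristic zero (equivalent to the identity of polynomials in the indeterminates x, s).\<close>
definition vpoly :: "nat \<Rightarrow> 'a::field_char_0 \<Rightarrow> nat \<Rightarrow> 'a \<Rightarrow> 'a" where
  "vpoly n x m s =
     (if n = 0 then 1
      else (\<Sum>k = 0..n div 2. (-1) ^ k * (fact n / (fact k * fact (n - 2 * k)))
              * (fact (m + n - k - 1) / fact (m + n - 1))
              * s ^ k / 2 ^ (2 * k) * x ^ (n - 2 * k)))"

definition tanh_fps :: "'a::field_char_0 fps" where
  "tanh_fps = (fps_exp 1 - fps_exp (-1)) / (fps_exp 1 + fps_exp (-1))"

text \<open>Tangent number T_j (meaningful for odd j = 2n+1):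
  tanh z = sum_n (-1)^n T_{2n+1} / (2n+1)! z^{2n+1}.\<close>
definition tangent_number :: "nat \<Rightarrow> 'a::field_char_0" where
  "tangent_number j = (-1) ^ ((j - 1) div 2) * fact j * fps_nth tanh_fps j"

end

theory Submission
  imports Defs
begin

text \<open>Multiplying by the ratio \<open>(m+n-1)!/(2m+n-1)!\<close> turns the three-term recurrence of the
  \<open>v\<^sub>n\<close> into \<open>(n+2m) u\<^sub>n\<^sub>+\<^sub>1 = x (n+m) u\<^sub>n - (s/4) n u\<^sub>n\<^sub>-\<^sub>1\<close>, i.e.\ into a linear second-order
  differential equation for the exponential generating function \<open>U\<close> of the \<open>u\<^sub>n\<close>. After
  conjugation by \<open>e\<^bsup>xz/2\<^esup>\<close> the function \<open>\<Phi> = e\<^bsup>-xz/2\<^esup> U\<close> satisfies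
  \<open>z \<Phi>'' + 2m \<Phi>' = (x\<^sup>2/4 - s/4) z \<Phi>\<close> with \<open>\<Phi>'(0) = 0\<close>, so \<open>\<Phi>\<close> is even. Since
  \<open>e\<^bsup>xz/2\<^esup> = cosh(xz/2) + sinh(xz/2)\<close>, the odd part of \<open>U\<close> is then \<open>tanh(xz/2)\<close> times its even part,
  and comparing coefficients of \<open>z\<^bsup>2n+1\<^esup>\<close> gives the expansion. For \<open>m = 0\<close> the ratio is \<open>1\<close> except at
  \<open>n = 0\<close>, where the recurrence forces \<open>u\<^sub>0 = 2\<close>; this produces the separate last term of (ii).\<close>

unbundle fps_syntax

lemma sum_lessThan_double:
  fixes f :: "nat \<Rightarrow> 'a::comm_monoid_add"
  shows "(\<Sum>i<2*n. f i) = (\<Sum>k<n. f (2*k) + f (2*k+1))"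
  by (induction n) (simp_all add: algebra_simps)

lemma fps_mult_nth_eq_0_parity:
  fixes f g :: "'a::comm_semiring_0 fps"
  assumes "\<And>i. P i \<Longrightarrow> f $ i = 0" "\<And>i. Q i \<Longrightarrow> g $ i = 0"
    and "\<And>i. i \<le> n \<Longrightarrow> P i \<or> Q (n - i)"
  shows "(f * g) $ n = 0"
  unfolding fps_mult_nth by (rule sum.neutral) (use assms in fastforce)

lemma tanh_fps_compose_linear_mult:
  fixes c :: "'a::field_char_0"
  shows "(tanh_fps oo (fps_const c * fps_X)) * (fps_exp c + fps_exp (-c)) = fps_exp c - fps_exp (-c)"
proof -
  define D :: "'a fps" where "D = fps_exp 1 + fps_exp (-1)"
  have "D $ 0 = 2" by (simp add: D_def)
  then have "tanh_fps * D = fps_exp 1 - fps_exp (-1)"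
    unfolding tanh_fps_def D_def[symmetric]
    by (intro fps_times_divide_eq) (auto simp: subdegree_eq_0_iff)
  then have "(tanh_fps * D) oo (fps_const c * fps_X) = (fps_exp 1 - fps_exp (-1)) oo (fps_const c * fps_X)"
    by simp
  then show ?thesis
    by (simp add: fps_compose_mult_distrib fps_compose_add_distrib fps_compose_sub_distrib D_def)
qed

lemma fps_exp_mult_even_nth_odd:
  fixes \<Phi> :: "'a::field_char_0 fps" and c :: 'a
  assumes even: "\<And>i. odd i \<Longrightarrow> \<Phi> $ i = 0"
  defines "U \<equiv> fps_exp c * \<Phi>" and "H \<equiv> tanh_fps oo (fps_const c * fps_X)"
  shows "U $ (2*n+1) = (\<Sum>k\<le>n. H $ (2*k+1) * U $ (2*n-2*k))"
proof -
  define G where "G = (fps_exp c + fps_exp (-c)) * \<Phi>"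
  define S where "S = (fps_exp c - fps_exp (-c)) * \<Phi>"
  have "G + S = fps_const 2 * U"
    by (simp add: U_def G_def S_def algebra_simps flip: numeral_fps_const)
  then have U2: "2 * U $ j = G $ j + S $ j" for j
    by (metis fps_add_nth fps_mult_left_const_nth)
  have G_odd: "G $ j = 0" if "odd j" for j
    unfolding G_def by (rule fps_mult_nth_eq_0_parity[where P=odd and Q=odd]) (use even that in auto)
  have S_even: "S $ j = 0" if "even j" for j
    unfolding S_def by (rule fps_mult_nth_eq_0_parity[where P=even and Q=odd]) (use even that in auto)
  have G_even: "G $ j = 2 * U $ j" if "even j" for j
    using U2[of j] S_even[OF that] by simp
  have "S = H * G"
    by (simp add: S_def G_def H_def tanh_fps_compose_linear_mult flip: mult.assoc)
  then have "2 * U $ (2*n+1) = (\<Sum>i<2*(n+1). H $ i * G $ (2*n+1-i))"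
    by (simp add: U2 G_odd fps_mult_nth atLeast0AtMost lessThan_Suc_atMost flip: Suc_eq_plus1)
  also have "\<dots> = (\<Sum>k<n+1. H $ (2*k) * G $ (2*n+1-2*k) + H $ (2*k+1) * G $ (2*n+1-(2*k+1)))"
    by (rule sum_lessThan_double)
  also have "\<dots> = (\<Sum>k\<le>n. H $ (2*k+1) * G $ (2*n-2*k))"
    unfolding lessThan_Suc_atMost[symmetric] Suc_eq_plus1
    by (intro sum.cong) (auto simp: G_odd)
  also have "\<dots> = 2 * (\<Sum>k\<le>n. H $ (2*k+1) * U $ (2*n-2*k))"
    unfolding sum_distrib_left by (intro sum.cong) (auto simp: G_even)
  finally show ?thesis by simp
qed

lemma odd_nth_expansion_tangent:
  fixes u :: "nat \<Rightarrow> 'a::field_char_0" and x :: 'a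
  assumes "\<And>i. odd i \<Longrightarrow> (fps_exp (-(x/2)) * Abs_fps (\<lambda>n. u n / fact n)) $ i = 0"
  shows "u (2*n+1) = (\<Sum>k=0..n. (-1)^k * of_nat ((2*n+1) choose (2*k+1))
                 * (tangent_number (2*k+1) / 2^(2*k+1)) * x^(2*k+1) * u (2*n-2*k))"
proof -
  define U where "U = Abs_fps (\<lambda>n. u n / fact n)"
  have EU: "fps_exp (x/2) * (fps_exp (-(x/2)) * U) = U"
    by (simp flip: mult.assoc fps_exp_add_mult)
  have "u (2*n+1) = fact (2*n+1) * U $ (2*n+1)"
    by (simp add: U_def del: fact_Suc)
  also have "\<dots> = fact (2*n+1) * (\<Sum>k\<le>n. (tanh_fps oo (fps_const (x/2) * fps_X)) $ (2*k+1) * U $ (2*n-2*k))"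
    using fps_exp_mult_even_nth_odd[of "fps_exp (-(x/2)) * U" "x/2" n, OF assms[folded U_def]]
    unfolding EU by (rule arg_cong)
  also have "\<dots> = fact (2*n+1) * (\<Sum>k\<le>n. (x/2)^(2*k+1) * tanh_fps $ (2*k+1) * (u (2*n-2*k) / fact (2*n-2*k)))"
    by (simp add: U_def)
  also have "\<dots> = (\<Sum>k\<le>n. (-1)^k * of_nat ((2*n+1) choose (2*k+1))
                 * (tangent_number (2*k+1) / 2^(2*k+1)) * x^(2*k+1) * u (2*n-2*k))"
    unfolding sum_distrib_left
  proof (intro sum.cong refl)
    fix k assume "k \<in> {..n}"
    then have binom: "(of_nat ((2*n+1) choose (2*k+1)) :: 'a) = fact (2*n+1) / (fact (2*k+1) * fact (2*n-2*k))"
      using binomial_fact[of "2*k+1" "2*n+1", where 'a='a] by simp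
    have tangent: "tangent_number (2*k+1) = (-1)^k * fact (2*k+1) * (tanh_fps $ (2*k+1) :: 'a)"
      by (simp add: tangent_number_def)
    have "(-1::'a)^k * (-1)^k = 1" by (simp flip: power_add)
    then show "fact (2*n+1) * ((x/2)^(2*k+1) * tanh_fps $ (2*k+1) * (u (2*n-2*k) / fact (2*n-2*k)))
      = (-1)^k * of_nat ((2*n+1) choose (2*k+1)) * (tangent_number (2*k+1) / 2^(2*k+1)) * x^(2*k+1) * u (2*n-2*k)"
      unfolding binom tangent by (simp add: power_divide field_simps del: fact_Suc)
  qed
  finally show ?thesis by (simp add: atLeast0AtMost)
qed

lemma fps_ode_of_nth_recurrence:
  fixes U :: "'a::field_char_0 fps"
  assumes rec: "\<And>j. of_nat (j+2) * of_nat (j+1+2*m) * U $ (j+2) = x * of_nat (j+1+m) * U $ (j+1) - s/4 * U $ j"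
    and init: "2 * U $ 1 = x * U $ 0"
  shows "fps_X * fps_deriv (fps_deriv U) + fps_const (of_nat (2*m)) * fps_deriv U
      - fps_const x * (fps_X * fps_deriv U) + fps_const (s/4) * (fps_X * U) - fps_const (of_nat m * x) * U = 0"
    (is "?L = 0")
proof (rule fps_ext)
  fix n
  show "?L $ n = 0 $ n"
  proof (cases n)
    case 0
    then show ?thesis using init by (simp add: algebra_simps)
  next
    case (Suc j)
    then show ?thesis using rec[of j] by (simp add: algebra_simps)
  qed
qed

lemma fps_ode_exp_conjugate:
  fixes U :: "'a::field_char_0 fps"
  assumes "fps_X * fps_deriv (fps_deriv U) + fps_const (of_nat (2*m)) * fps_deriv U
      - fps_const (2*c) * (fps_X * fps_deriv U) + fps_const (s/4) * (fps_X * U) - fps_const (of_nat m * (2*c)) * U = 0"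
  defines "\<Phi> \<equiv> fps_exp (-c) * U"
  shows "fps_X * fps_deriv (fps_deriv \<Phi>) + fps_const (of_nat (2*m)) * fps_deriv \<Phi> - fps_const (c*c - s/4) * (fps_X * \<Phi>) = 0"
proof -
  define E where "E = fps_exp c"
  define C where "C = fps_const c"
  have U: "U = E * \<Phi>"
    by (simp add: \<Phi>_def E_def flip: mult.assoc fps_exp_add_mult)
  have dE: "fps_deriv E = C * E" and dC: "fps_deriv C = 0"
    by (simp_all add: E_def C_def)
  have dU: "fps_deriv U = E * (C * \<Phi> + fps_deriv \<Phi>)"
    by (simp add: U dE algebra_simps)
  have ddU: "fps_deriv (fps_deriv U) = E * (C * C * \<Phi> + (C + C) * fps_deriv \<Phi> + fps_deriv (fps_deriv \<Phi>))"
    by (simp add: dU dE dC algebra_simps del: fps_deriv_mult_const_left)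
  have const_eqs: "fps_const (2*c) = C + C" "fps_const (of_nat m * (2*c)) = fps_const (of_nat m) * (C + C)"
      "fps_const (of_nat (2*m)) = fps_const (of_nat m) + (fps_const (of_nat m) :: 'a fps)"
      "fps_const (c*c - s/4) = C * C - fps_const (s/4)"
    by (simp_all add: C_def algebra_simps)
  have "E * (fps_X * fps_deriv (fps_deriv \<Phi>) + fps_const (of_nat (2*m)) * fps_deriv \<Phi> - fps_const (c*c - s/4) * (fps_X * \<Phi>)) = 0"
    using assms(1) unfolding ddU unfolding dU const_eqs unfolding U by algebra
  moreover have "E $ 0 \<noteq> 0"
    by (simp add: E_def)
  ultimately show ?thesis by auto
qed

lemma odd_nth_eq_0_of_recurrence:
  fixes \<Phi> :: "'a::field_char_0 fps"
  assumes rec: "\<And>j. of_nat (j+2) * of_nat (j+1+2*m) * \<Phi> $ (j+2) = a * \<Phi> $ j" and "\<Phi> $ 1 = 0"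
  shows "odd i \<Longrightarrow> \<Phi> $ i = 0"
proof -
  have "\<Phi> $ (2*j+1) = 0" for j
  proof (induction j)
    case (Suc j)
    have "(of_nat (2*j+3) * of_nat (2*j+2+2*m) :: 'a) * \<Phi> $ (2*j+3) = 0"
      using rec[of "2*j+1"] Suc by (simp add: numeral_3_eq_3)
    then show ?case by (simp only: of_nat_mult[symmetric] mult_eq_0_iff of_nat_eq_0_iff) (simp add: numeral_3_eq_3)
  qed (use assms in simp)
  then show "odd i \<Longrightarrow> \<Phi> $ i = 0" by (metis oddE)
qed

lemma exp_twisted_egf_odd_nth_eq_0:
  fixes u :: "nat \<Rightarrow> 'a::field_char_0"
  assumes rec: "\<And>n. n \<ge> 1 \<Longrightarrow> of_nat (n+2*m) * u (n+1) = x * of_nat (n+m) * u n - s/4 * of_nat n * u (n-1)"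
    and init: "2 * u 1 = x * u 0"
  shows "odd i \<Longrightarrow> (fps_exp (-(x/2)) * Abs_fps (\<lambda>n. u n / fact n)) $ i = 0"
proof -
  define U where "U = Abs_fps (\<lambda>n. u n / fact n)"
  define \<Phi> where "\<Phi> = fps_exp (-(x/2)) * U"
  have "of_nat (j+2) * of_nat (j+1+2*m) * U $ (j+2) = x * of_nat (j+1+m) * U $ (j+1) - s/4 * U $ j" for j
  proof -
    have shift: "of_nat (Suc k) * (a / fact (Suc k)) = (a / fact k :: 'a)" for a k
      by (simp del: of_nat_Suc)
    have "of_nat (j+2) * (u (j+2) / fact (j+2)) = u (j+2) / fact (j+1)"
      using shift[of "j+1" "u (j+2)"] by (simp add: numeral_2_eq_2)
    then have "of_nat (j+2) * of_nat (j+1+2*m) * U $ (j+2) = of_nat (j+1+2*m) * u (j+2) / fact (j+1)"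
      by (simp add: U_def flip: times_divide_eq_right mult.assoc)
    also have "\<dots> = (x * of_nat (j+1+m) * u (j+1) - s/4 * of_nat (j+1) * u j) / fact (j+1)"
      using rec[of "j+1"] by simp
    also have "\<dots> = x * of_nat (j+1+m) * U $ (j+1) - s/4 * U $ j"
      using shift[of j "u j"] by (simp add: U_def diff_divide_distrib flip: times_divide_eq_right mult.assoc)
    finally show ?thesis .
  qed
  then have "fps_X * fps_deriv (fps_deriv U) + fps_const (of_nat (2*m)) * fps_deriv U
      - fps_const (2*(x/2)) * (fps_X * fps_deriv U) + fps_const (s/4) * (fps_X * U) - fps_const (of_nat m * (2*(x/2))) * U = 0"
    using fps_ode_of_nth_recurrence[of m U x s] init by (simp add: U_def)
  then have "fps_X * fps_deriv (fps_deriv \<Phi>) + fps_const (of_nat (2*m)) * fps_deriv \<Phi> - fps_const (x/2*(x/2) - s/4) * (fps_X * \<Phi>) = 0"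
    unfolding \<Phi>_def by (rule fps_ode_exp_conjugate)
  then have "of_nat (j+2) * of_nat (j+1+2*m) * \<Phi> $ (j+2) = (x/2*(x/2) - s/4) * \<Phi> $ j" for j
    by (drule_tac arg_cong[where f="\<lambda>f. f $ Suc j"]) (simp add: algebra_simps)
  moreover have "\<Phi> $ 1 = 0"
    using init by (simp add: \<Phi>_def U_def fps_mult_nth algebra_simps)
  ultimately show "odd i \<Longrightarrow> (fps_exp (-(x/2)) * Abs_fps (\<lambda>n. u n / fact n)) $ i = 0"
    unfolding \<Phi>_def U_def by (rule odd_nth_eq_0_of_recurrence)
qed

text \<open>The \<open>k\<close>-th summand of \<open>vpoly n\<close>, extended by \<open>0\<close> for \<open>2k > n\<close> so that the termwise identities
  below hold for every \<open>k\<close>.\<close>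

definition vpoly_term :: "nat \<Rightarrow> nat \<Rightarrow> 'a::field_char_0 \<Rightarrow> nat \<Rightarrow> 'a \<Rightarrow> 'a" where
  "vpoly_term n k x m s =
     (if 2 * k \<le> n then (-1) ^ k * (fact n / (fact k * fact (n - 2 * k)))
              * (fact (m + n - k - 1) / fact (m + n - 1))
              * s ^ k / 2 ^ (2 * k) * x ^ (n - 2 * k)
      else 0)"

lemma vpoly_eq_sum_term:
  assumes "n div 2 < R"
  shows "vpoly n x m s = (\<Sum>k<R. vpoly_term n k x m s)"
proof -
  have "vpoly n x m s = (\<Sum>k\<le>n div 2. vpoly_term n k x m s)"
    by (cases "n = 0") (auto simp: vpoly_def vpoly_term_def atLeast0AtMost intro!: sum.cong)
  also have "\<dots> = (\<Sum>k<R. vpoly_term n k x m s)"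
    using assms by (intro sum.mono_neutral_left) (auto simp: vpoly_term_def)
  finally show ?thesis .
qed

lemma vpoly_term_0 [simp]: "vpoly_term n 0 x m s = x ^ n"
  by (simp add: vpoly_term_def)

lemma vpoly_term_shift2:
  fixes x s :: "'a::field_char_0"
  assumes "0 < m + n"
  shows "of_nat ((k+1) * (m+n+1) * (m+n)) * vpoly_term (n+2) (k+1) x m s
    = - s/4 * of_nat ((n+2) * (n+1) * (m+n-k)) * vpoly_term n k x m s"
proof (cases "2 * k \<le> n")
  case True
  then have "k < m + n" using assms by linarith
  then have f1: "fact (m + (n+2) - (k+1) - 1) = (of_nat (m+n-k) * fact (m+n-k-1) :: 'a)"
    using fact_reduce[of "m+n-k", where 'a='a] by (simp add: Suc_diff_Suc)
  have f2: "fact (m + (n+2) - 1) = (of_nat (m+n+1) * of_nat (m+n) * fact (m+n-1) :: 'a)"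
    using assms fact_reduce[of "m+n", where 'a='a] by (simp add: Suc_diff_Suc)
  have f3: "fact (n+2) = (of_nat (n+2) * of_nat (n+1) * fact n :: 'a)"
    by (simp add: numeral_2_eq_2)
  have f4: "fact (k+1) = (of_nat (k+1) * fact k :: 'a)"
    by simp
  have d: "n + 2 - 2 * (k+1) = n - 2 * k" by simp
  \<comment> \<open>Abstracting the factors keeps the simplifier from splitting them into sums, whose
    nonvanishing it cannot establish in an arbitrary field of characteristic 0.\<close>
  define K1 :: 'a where "K1 = of_nat (k+1)"
  define M1 :: 'a where "M1 = of_nat (m+n+1)"
  define M0 :: 'a where "M0 = of_nat (m+n)"
  have "K1 \<noteq> 0" "M1 \<noteq> 0" "M0 \<noteq> 0"
    using assms by (simp_all add: K1_def M1_def M0_def del: of_nat_add of_nat_Suc)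
  with True show ?thesis
    unfolding vpoly_term_def f1 f2 f3 f4 d of_nat_mult K1_def[symmetric] M1_def[symmetric] M0_def[symmetric]
    by (simp add: field_simps power_add)
qed (simp add: vpoly_term_def)

lemma vpoly_term_shift1:
  fixes x s :: "'a::field_char_0"
  assumes "0 < m + n"
  shows "of_nat ((k+1) * (m+n)) * x * vpoly_term (n+1) (k+1) x m s
    = - s/4 * of_nat ((n+1) * (n-2*k)) * vpoly_term n k x m s"
proof (cases "2 * k < n")
  case True
  have f1: "fact (m + (n+1) - (k+1) - 1) = (fact (m+n-k-1) :: 'a)" by simp
  have f2: "fact (m + (n+1) - 1) = (of_nat (m+n) * fact (m+n-1) :: 'a)"
    using assms fact_reduce[of "m+n", where 'a='a] by simp
  have f3: "fact (n+1) = (of_nat (n+1) * fact n :: 'a)"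
    by simp
  have f4: "fact (k+1) = (of_nat (k+1) * fact k :: 'a)"
    by simp
  have f5: "fact (n - 2*k) = (of_nat (n-2*k) * fact (n + 1 - 2*(k+1)) :: 'a)"
    using True fact_reduce[of "n-2*k", where 'a='a] by simp
  have "n - 2*k = Suc (n + 1 - 2*(k+1))" using True by simp
  then have p: "x ^ (n - 2*k) = x * x ^ (n + 1 - 2*(k+1))" by simp
  define K1 :: 'a where "K1 = of_nat (k+1)"
  define M0 :: 'a where "M0 = of_nat (m+n)"
  define D :: 'a where "D = of_nat (n-2*k)"
  have "K1 \<noteq> 0" "M0 \<noteq> 0" "D \<noteq> 0"
    using assms True by (simp_all add: K1_def M0_def D_def del: of_nat_add of_nat_Suc of_nat_diff)
  with True show ?thesis
    unfolding vpoly_term_def f1 f2 f3 f4 f5 p of_nat_mult K1_def[symmetric] M0_def[symmetric] D_def[symmetric]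
    by (simp add: field_simps power_add)
qed (auto simp: vpoly_term_def)

lemma vpoly_term_recurrence:
  fixes x s :: "'a::field_char_0"
  assumes "0 < m + n"
  shows "of_nat ((m+n+1) * (m+n)) * vpoly_term (n+2) (k+1) x m s
    = x * of_nat ((m+n+1) * (m+n)) * vpoly_term (n+1) (k+1) x m s
      - s/4 * of_nat ((n+1) * (2*m+n)) * vpoly_term n k x m s"
proof -
  have key: "of_nat ((n+2) * (m+n-k)) * vpoly_term n k x m s
      = of_nat ((m+n+1) * (n-2*k) + (k+1) * (2*m+n)) * vpoly_term n k x m s"
  proof (cases "2 * k \<le> n")
    case True
    then obtain a where "n = 2*k + a" using le_Suc_ex by blast
    then have "(n+2) * (m+n-k) = (m+n+1) * (n-2*k) + (k+1) * (2*m+n)"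
      by (simp add: algebra_simps)
    then show ?thesis by simp
  qed (simp add: vpoly_term_def)
  have "of_nat (k+1) * (of_nat ((m+n+1) * (m+n)) * vpoly_term (n+2) (k+1) x m s)
      = of_nat (k+1) * (x * of_nat ((m+n+1) * (m+n)) * vpoly_term (n+1) (k+1) x m s
        - s/4 * of_nat ((n+1) * (2*m+n)) * vpoly_term n k x m s)"
    using vpoly_term_shift2[OF assms, of k x s] vpoly_term_shift1[OF assms, of k x s] key
    unfolding of_nat_mult of_nat_add by algebra
  then show ?thesis by (simp del: of_nat_add of_nat_Suc)
qed

lemma vpoly_recurrence:
  fixes x s :: "'a::field_char_0"
  shows "of_nat ((m+n+1) * (m+n)) * vpoly (n+2) x m s
    = x * of_nat ((m+n+1) * (m+n)) * vpoly (n+1) x m s - s/4 * of_nat ((n+1) * (2*m+n)) * vpoly n x m s"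
proof (cases "m + n = 0")
  case False
  define c :: 'a where "c = of_nat ((m+n+1) * (m+n))"
  define d :: 'a where "d = of_nat ((n+1) * (2*m+n))"
  have "vpoly (n+2) x m s = (\<Sum>k<Suc (n+2). vpoly_term (n+2) k x m s)"
    by (rule vpoly_eq_sum_term) simp
  then have v2: "vpoly (n+2) x m s = x ^ (n+2) + (\<Sum>k<n+2. vpoly_term (n+2) (k+1) x m s)"
    unfolding sum.lessThan_Suc_shift by simp
  have "vpoly (n+1) x m s = (\<Sum>k<Suc (n+2). vpoly_term (n+1) k x m s)"
    by (rule vpoly_eq_sum_term) simp
  then have v1: "vpoly (n+1) x m s = x ^ (n+1) + (\<Sum>k<n+2. vpoly_term (n+1) (k+1) x m s)"
    unfolding sum.lessThan_Suc_shift by simp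
  have v0: "vpoly n x m s = (\<Sum>k<n+2. vpoly_term n k x m s)"
    by (rule vpoly_eq_sum_term) simp
  have term_rec: "c * vpoly_term (n+2) (k+1) x m s
      = x * c * vpoly_term (n+1) (k+1) x m s - s/4 * d * vpoly_term n k x m s" for k
    unfolding c_def d_def by (rule vpoly_term_recurrence) (use False in simp)
  have "c * vpoly (n+2) x m s = c * x ^ (n+2) + (\<Sum>k<n+2. c * vpoly_term (n+2) (k+1) x m s)"
    unfolding v2 by (simp add: distrib_left sum_distrib_left)
  also have "\<dots> = x * c * x ^ (n+1) + (\<Sum>k<n+2. x * c * vpoly_term (n+1) (k+1) x m s - s/4 * d * vpoly_term n k x m s)"
    unfolding term_rec by (simp add: mult_ac)
  also have "\<dots> = x * c * vpoly (n+1) x m s - s/4 * d * vpoly n x m s"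
    unfolding v1 v0 by (simp add: distrib_left sum_distrib_left sum_subtractf mult.assoc)
  finally show ?thesis by (simp add: c_def d_def)
qed simp

text \<open>The ratio \<open>\<Gamma>(m+n)/\<Gamma>(2m+n)\<close>. At \<open>n = 0\<close> it is written as \<open>2 m!/(2m)!\<close>, which for \<open>m = 0\<close> is the
  limit \<open>2\<close> of \<open>\<Gamma>(m)/\<Gamma>(2m)\<close>: the value compatible with \<open>2 u\<^sub>1 = x u\<^sub>0\<close>.\<close>

definition vpoly_scale :: "nat \<Rightarrow> nat \<Rightarrow> 'a::field_char_0" where
  "vpoly_scale m n = (if n = 0 then 2 * fact m / fact (2*m) else fact (m+n-1) / fact (2*m+n-1))"

lemma vpoly_scale_pos:
  assumes "1 \<le> m"
  shows "vpoly_scale m n = fact (m+n-1) / fact (2*m+n-1)"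
proof -
  have "fact m = (of_nat m * fact (m-1) :: 'a)" "fact (2*m) = (2 * of_nat m * fact (2*m-1) :: 'a)"
    using assms fact_reduce[of m] fact_reduce[of "2*m"] by simp_all
  moreover have "(of_nat m :: 'a) \<noteq> 0" using assms by simp
  ultimately show ?thesis by (simp add: vpoly_scale_def)
qed

lemma vpoly_scale_0: "vpoly_scale 0 n = (if n = 0 then 2 else 1)"
  by (simp add: vpoly_scale_def)

lemma vpoly_scale_nonzero: "vpoly_scale m n \<noteq> 0"
  by (simp add: vpoly_scale_def)

lemma vpoly_scale_Suc: "of_nat (2*m+n) * vpoly_scale m (n+1) = of_nat (m+n) * vpoly_scale m n"
proof (cases "n = 0")
  case True
  then show ?thesis by (simp add: vpoly_scale_def)
next
  case False
  have "fact (m+n) = (of_nat (m+n) * fact (m+n-1) :: 'a)" "fact (2*m+n) = (of_nat (2*m+n) * fact (2*m+n-1) :: 'a)"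
    using False fact_reduce[of "m+n"] fact_reduce[of "2*m+n"] by simp_all
  moreover have "(of_nat (2*m+n) :: 'a) \<noteq> 0" using False by (simp del: of_nat_add)
  ultimately show ?thesis using False by (simp add: vpoly_scale_def)
qed

lemma vpoly_2_0: "vpoly 2 x 0 s = x^2 - s/2"
  by (simp add: vpoly_def numeral_2_eq_2 field_simps power2_eq_square)

lemma scaled_vpoly_recurrence:
  fixes x s :: "'a::field_char_0" and m n :: nat
  defines "u \<equiv> \<lambda>n. vpoly n x m s * vpoly_scale m n"
  assumes "1 \<le> n"
  shows "of_nat (n+2*m) * u (n+1) = x * of_nat (n+m) * u n - s/4 * of_nat n * u (n-1)"
proof -
  define N where "N = n - 1"
  have n: "n = N + 1" "n + 1 = N + 2" "n - 1 = N" using assms by (simp_all add: N_def)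
  show ?thesis
  proof (cases "m = 0 \<and> N = 0")
    case True
    then show ?thesis
      by (simp add: u_def n vpoly_2_0 vpoly_scale_0) (simp add: vpoly_def)
  next
    case False
    then have "(of_nat (2*m+N) :: 'a) \<noteq> 0" by (simp del: of_nat_add)
    moreover have "of_nat (2*m+N) * (of_nat (N+1+2*m) * (vpoly (N+2) x m s * vpoly_scale m (N+2)))
        = of_nat (2*m+N) * (x * of_nat (N+1+m) * (vpoly (N+1) x m s * vpoly_scale m (N+1))
          - s/4 * of_nat (N+1) * (vpoly N x m s * vpoly_scale m N))"
    proof -
      have "of_nat (2*m+N+1) * vpoly_scale m (N+2) = (of_nat (m+N+1) * vpoly_scale m (N+1) :: 'a)"
        using vpoly_scale_Suc[of m "N+1"] by (simp add: add.assoc)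
      moreover have "of_nat (2*m+N) * vpoly_scale m (N+1) = (of_nat (m+N) * vpoly_scale m N :: 'a)"
        by (rule vpoly_scale_Suc)
      ultimately show ?thesis
        using vpoly_recurrence[of m N x s] unfolding of_nat_mult of_nat_add by algebra
    qed
    ultimately show ?thesis by (simp add: u_def n)
  qed
qed

lemma scaled_vpoly_init:
  "2 * (vpoly 1 x m s * vpoly_scale m 1) = x * (vpoly 0 x m s * vpoly_scale m 0)"
  by (simp add: vpoly_def vpoly_scale_def)

lemma scaled_vpoly_odd_expansion:
  fixes x s :: "'a::field_char_0"
  shows "vpoly (2*n+1) x m s * vpoly_scale m (2*n+1) =
    (\<Sum>k=0..n. (-1)^k * of_nat ((2*n+1) choose (2*k+1)) * (tangent_number (2*k+1) / 2^(2*k+1))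
      * x^(2*k+1) * (vpoly (2*n-2*k) x m s * vpoly_scale m (2*n-2*k)))"
proof -
  define u where "u = (\<lambda>n. vpoly n x m s * vpoly_scale m n)"
  have "odd i \<Longrightarrow> (fps_exp (-(x/2)) * Abs_fps (\<lambda>n. u n / fact n)) $ i = 0" for i
    using exp_twisted_egf_odd_nth_eq_0[of m u x s] scaled_vpoly_recurrence[where x=x and s=s and m=m] scaled_vpoly_init[of x m s]
    by (simp add: u_def)
  from odd_nth_expansion_tangent[OF this] show ?thesis by (simp add: u_def)
qed

lemma vpoly_odd_expansion_pos:
  fixes x s :: "'a::field_char_0"
  assumes "1 \<le> m"
  shows "vpoly (2*n+1) x m s =
    (\<Sum>k=0..n. (-1)^k * of_nat ((2*n+1) choose (2*k+1))
       * (fact (m+2*n-2*k-1) * fact (2*m+2*n) / (fact (m+2*n) * fact (2*m+2*n-2*k-1)))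
       * (tangent_number (2*k+1) / 2^(2*k+1)) * x^(2*k+1) * vpoly (2*n-2*k) x m s)"
proof -
  have "vpoly (2*n+1) x m s = (vpoly (2*n+1) x m s * vpoly_scale m (2*n+1)) / vpoly_scale m (2*n+1)"
    by (simp add: vpoly_scale_nonzero)
  also have "\<dots> = (\<Sum>k=0..n. (-1)^k * of_nat ((2*n+1) choose (2*k+1)) * (tangent_number (2*k+1) / 2^(2*k+1))
      * x^(2*k+1) * (vpoly (2*n-2*k) x m s * vpoly_scale m (2*n-2*k)) / vpoly_scale m (2*n+1))"
    unfolding scaled_vpoly_odd_expansion sum_divide_distrib ..
  also have "\<dots> = (\<Sum>k=0..n. (-1)^k * of_nat ((2*n+1) choose (2*k+1))
       * (fact (m+2*n-2*k-1) * fact (2*m+2*n) / (fact (m+2*n) * fact (2*m+2*n-2*k-1)))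
       * (tangent_number (2*k+1) / 2^(2*k+1)) * x^(2*k+1) * vpoly (2*n-2*k) x m s)"
  proof (intro sum.cong refl)
    fix k assume "k \<in> {0..n}"
    then have "m + (2*n-2*k) - 1 = m+2*n-2*k-1" "2*m + (2*n-2*k) - 1 = 2*m+2*n-2*k-1" by auto
    then show "(-1)^k * of_nat ((2*n+1) choose (2*k+1)) * (tangent_number (2*k+1) / 2^(2*k+1))
      * x^(2*k+1) * (vpoly (2*n-2*k) x m s * vpoly_scale m (2*n-2*k)) / vpoly_scale m (2*n+1)
      = (-1)^k * of_nat ((2*n+1) choose (2*k+1))
       * (fact (m+2*n-2*k-1) * fact (2*m+2*n) / (fact (m+2*n) * fact (2*m+2*n-2*k-1)))
       * (tangent_number (2*k+1) / 2^(2*k+1)) * x^(2*k+1) * vpoly (2*n-2*k) x m s"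
      using assms by (simp add: vpoly_scale_pos field_simps del: fact_Suc)
  qed
  finally show ?thesis .
qed

lemma vpoly_odd_expansion_0:
  fixes x s :: "'a::field_char_0"
  shows "vpoly (2*n+1) x 0 s =
    (\<Sum>k<n. (-1)^k * of_nat ((2*n+1) choose (2*k+1)) * (tangent_number (2*k+1) / 2^(2*k+1))
       * x^(2*k+1) * vpoly (2*n-2*k) x 0 s)
    + (-1)^n * (tangent_number (2*n+1) / 2^(2*n)) * x^(2*n+1)"
proof -
  define f where "f k = (-1)^k * of_nat ((2*n+1) choose (2*k+1)) * (tangent_number (2*k+1) / 2^(2*k+1))
      * x^(2*k+1) * (vpoly (2*n-2*k) x 0 s * vpoly_scale 0 (2*n-2*k))" for k
  have "vpoly (2*n+1) x 0 s = (\<Sum>k=0..n. f k)"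
    using scaled_vpoly_odd_expansion[where n=n and x=x and m=0 and s=s] by (simp add: f_def vpoly_scale_0)
  also have "\<dots> = (\<Sum>k<n. f k) + f n"
    by (simp add: atLeast0AtMost flip: lessThan_Suc_atMost)
  also have "(\<Sum>k<n. f k) = (\<Sum>k<n. (-1)^k * of_nat ((2*n+1) choose (2*k+1)) * (tangent_number (2*k+1) / 2^(2*k+1))
       * x^(2*k+1) * vpoly (2*n-2*k) x 0 s)"
    by (intro sum.cong) (auto simp: f_def vpoly_scale_0)
  also have "f n = (-1)^n * (tangent_number (2*n+1) / 2^(2*n)) * x^(2*n+1)"
    by (simp add: f_def vpoly_scale_0 vpoly_def)
  finally show ?thesis .
qed

theorem mainTheorem16:
  fixes x s :: "'a::field_char_0"
  shows "(\<forall>m n. m \<ge> 1 \<longrightarrow>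
            vpoly (2 * n + 1) x m s =
              (\<Sum>k = 0..n. (-1) ^ k * of_nat ((2 * n + 1) choose (2 * k + 1))
                 * (fact (m + 2 * n - 2 * k - 1) * fact (2 * m + 2 * n)
                    / (fact (m + 2 * n) * fact (2 * m + 2 * n - 2 * k - 1)))
                 * (tangent_number (2 * k + 1) / 2 ^ (2 * k + 1))
                 * x ^ (2 * k + 1) * vpoly (2 * n - 2 * k) x m s))
       \<and> (\<forall>n. vpoly (2 * n + 1) x 0 s =
              (\<Sum>k<n. (-1) ^ k * of_nat ((2 * n + 1) choose (2 * k + 1))
                 * (tangent_number (2 * k + 1) / 2 ^ (2 * k + 1))
                 * x ^ (2 * k + 1) * vpoly (2 * n - 2 * k) x 0 s)
              + (-1) ^ n * (tangent_number (2 * n + 1) / 2 ^ (2 * n)) * x ^ (2 * n + 1))"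
proof (intro conjI allI impI)
  fix m n :: nat
  assume "m \<ge> 1"
  then show "vpoly (2 * n + 1) x m s =
              (\<Sum>k = 0..n. (-1) ^ k * of_nat ((2 * n + 1) choose (2 * k + 1))
                 * (fact (m + 2 * n - 2 * k - 1) * fact (2 * m + 2 * n)
                    / (fact (m + 2 * n) * fact (2 * m + 2 * n - 2 * k - 1)))
                 * (tangent_number (2 * k + 1) / 2 ^ (2 * k + 1))
                 * x ^ (2 * k + 1) * vpoly (2 * n - 2 * k) x m s)"
    by (rule vpoly_odd_expansion_pos)
qed (rule vpoly_odd_expansion_0)

end
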